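(* Let $\mathcal{F}$ be a closure system on a finite set $X$ with closure operator $\phi$, let $\Sigma$ be the canonical direct basis of $\mathcal{F}$, let $A\in\mathcal{F}$ be meet-irreducible with unique upper cover $A^*$ in $\mathcal{F}$, and write $A^*\setminus A=\{d_1,\dots,d_k\}$. Let $Y_1,\dots,Y_t$ be the minimal (with respect to inclusion) transversals of the hypergraph $H=\langle A,\mathcal{T}\rangle$, where $\mathcal{T}=\{A\setminus Z: Z\in\mathcal{F},\ Z\subsetneq A\}$, and let $\Sigma_1=\{Y_j\rightarrow d_i: j\leq t,\ i\leq k\}$. Then $\Sigma\cup\Sigma_1$ is a direct basis of the closure system $\mathcal{F}^*=\mathcal{F}\setminus\{A\}$.
   Context: A closure system on $X$ is a family of subsets of $X$ containing $X$ and closed under intersections; its closure operator maps $Y$ to the smallest member containing $Y$. An implication $C\rightarrow d$ ($C\subseteq X$, $d\in X$) holds on $Y$ if $C\not\subseteq Y$ or $d\in Y$. A set $\Sigma$ of implications is a basis of a closure system $\mathcal{G}$ if $\mathcal{G}$ is exactly the family of subsets satisfying all implications of $\Sigma$; it is direct if moreover, with $\psi$ the closure operator of $\mathcal{G}$, $\psi(Y)=Y\cup\{d:(C\rightarrow d)\in\Sigma,\ C\subseteq Y\}$ for all $Y\subseteq X$. The canonical direct basis of $\mathcal{F}$ is the set of all $C\rightarrow d$ with $d\notin C$, $d\in\phi(C)$, and $d\notin\phi(C')$ for all $C'\subsetneq C$. $A\in\mathcal{F}$ is meet-irreducible if $A\neq X$ and $A$ has a unique upper cover in $\mathcal{F}$.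 A hypergraph is a pair $\langle B,\mathcal{B}\rangle$ with $\mathcal{B}\subseteq 2^B$; $U\subseteq B$ is a transversal if $U\cap V\neq\emptyset$ for every $V\in\mathcal{B}$. *)

theory Defs
  imports Main
begin

definition closure_system :: "'a set \<Rightarrow> 'a set set \<Rightarrow> bool" where
  "closure_system X F \<longleftrightarrow> F \<subseteq> Pow X \<and> X \<in> F \<and>
     (\<forall>S. S \<subseteq> F \<longrightarrow> S \<noteq> {} \<longrightarrow> \<Inter>S \<in> F)"

definition clo :: "'a set set \<Rightarrow> 'a set \<Rightarrow> 'a set" where
  "clo F Y = \<Inter>{Z \<in> F. Y \<subseteq> Z}"

type_synonym 'a impl = "'a set \<times> 'a"

definition holds :: "'a impl \<Rightarrow> 'a set \<Rightarrow> bool" where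
  "holds imp Y \<longleftrightarrow> \<not> fst imp \<subseteq> Y \<or> snd imp \<in> Y"

definition is_basis :: "'a set \<Rightarrow> 'a impl set \<Rightarrow> 'a set set \<Rightarrow> bool" where
  "is_basis X \<Sigma> G \<longleftrightarrow> G = {Y. Y \<subseteq> X \<and> (\<forall>imp\<in>\<Sigma>. holds imp Y)}"

definition is_direct_basis :: "'a set \<Rightarrow> 'a impl set \<Rightarrow> 'a set set \<Rightarrow> bool" where
  "is_direct_basis X \<Sigma> G \<longleftrightarrow> is_basis X \<Sigma> G \<and>
     (\<forall>Y. Y \<subseteq> X \<longrightarrow> clo G Y = Y \<union> {d. \<exists>C. (C, d) \<in> \<Sigma> \<and> C \<subseteq> Y})"

definition canonical_direct_basis :: "'a set \<Rightarrow> 'a set set \<Rightarrow> 'a impl set" where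
  "canonical_direct_basis X F =
     {(C, d). C \<subseteq> X \<and> d \<in> X \<and> d \<notin> C \<and> d \<in> clo F C \<and>
              (\<forall>C'. C' \<subset> C \<longrightarrow> d \<notin> clo F C')}"

definition upper_cover :: "'a set set \<Rightarrow> 'a set \<Rightarrow> 'a set \<Rightarrow> bool" where
  "upper_cover F A B \<longleftrightarrow> B \<in> F \<and> A \<subset> B \<and> \<not> (\<exists>Z\<in>F. A \<subset> Z \<and> Z \<subset> B)"

definition meet_irreducible :: "'a set \<Rightarrow> 'a set set \<Rightarrow> 'a set \<Rightarrow> bool" where
  "meet_irreducible X F A \<longleftrightarrow> A \<in> F \<and> A \<noteq> X \<and> (\<exists>!B. upper_cover F A B)"

definition transversal :: "'a set \<Rightarrow> 'a set set \<Rightarrow> 'a set \<Rightarrow> bool" where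
  "transversal B \<B> U \<longleftrightarrow> U \<subseteq> B \<and> (\<forall>V\<in>\<B>. U \<inter> V \<noteq> {})"

definition minimal_transversals :: "'a set \<Rightarrow> 'a set set \<Rightarrow> 'a set set" where
  "minimal_transversals B \<B> =
     {U. transversal B \<B> U \<and> (\<forall>U'. U' \<subset> U \<longrightarrow> \<not> transversal B \<B> U')}"

end

theory Submission
  imports Defs
begin

text \<open>Removing the meet-irreducible A from F changes only the closures equal to A: every
  closed set strictly above A contains its unique upper cover A*, so these sets now close to A*.
  The canonical direct basis still produces the old closure, and the added implications
  \<open>Y\<^sub>j \<rightarrow> d\<^sub>i\<close> supply the missing part \<open>A* - A\<close>: a subset of A is a transversal of
  \<open>\<langle>A, \<T>\<rangle>\<close> exactly when no proper closed subset of A contains it, i.e. when it generates A.\<close>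

lemma closure_system_subset: "closure_system X F \<Longrightarrow> Z \<in> F \<Longrightarrow> Z \<subseteq> X"
  unfolding closure_system_def by auto

lemma closure_system_top: "closure_system X F \<Longrightarrow> X \<in> F"
  unfolding closure_system_def by simp

lemma closure_system_Inter: "closure_system X F \<Longrightarrow> S \<subseteq> F \<Longrightarrow> S \<noteq> {} \<Longrightarrow> \<Inter>S \<in> F"
  unfolding closure_system_def by simp

lemma finite_closure_system: "finite X \<Longrightarrow> closure_system X F \<Longrightarrow> finite F"
  unfolding closure_system_def by (meson finite_Pow_iff finite_subset)

lemma subset_clo: "Y \<subseteq> clo F Y"
  unfolding clo_def by auto

lemma clo_least: "Z \<in> F \<Longrightarrow> Y \<subseteq> Z \<Longrightarrow> clo F Y \<subseteq> Z"
  unfolding clo_def by auto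

lemma clo_mono: "Y \<subseteq> Y' \<Longrightarrow> clo F Y \<subseteq> clo F Y'"
  unfolding clo_def by auto

lemma clo_in:
  assumes "closure_system X F" and "Y \<subseteq> X"
  shows "clo F Y \<in> F"
proof -
  have "{Z \<in> F. Y \<subseteq> Z} \<noteq> {}" using closure_system_top[OF assms(1)] assms(2) by blast
  then show ?thesis
    unfolding clo_def by (simp add: closure_system_Inter[OF assms(1)])
qed

lemma clo_eq_self: "Y \<in> F \<Longrightarrow> clo F Y = Y"
  by (simp add: clo_least subset_antisym subset_clo)

lemma mem_closure_system_iff:
  assumes "closure_system X F"
  shows "Y \<in> F \<longleftrightarrow> Y \<subseteq> X \<and> clo F Y = Y"
  using assms clo_eq_self clo_in closure_system_subset by metis

lemma is_direct_basisI:
  assumes cs: "closure_system X G"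
    and clo_eq: "\<And>Y. Y \<subseteq> X \<Longrightarrow> clo G Y = Y \<union> {d. \<exists>C. (C, d) \<in> \<Sigma> \<and> C \<subseteq> Y}"
  shows "is_direct_basis X \<Sigma> G"
proof -
  have holds_iff: "(\<forall>imp\<in>\<Sigma>. holds imp Y) \<longleftrightarrow> {d. \<exists>C. (C, d) \<in> \<Sigma> \<and> C \<subseteq> Y} \<subseteq> Y" for Y
    unfolding holds_def by fastforce
  have "Y \<in> G \<longleftrightarrow> Y \<subseteq> X \<and> (\<forall>imp\<in>\<Sigma>. holds imp Y)" for Y
    unfolding mem_closure_system_iff[OF cs, of Y] holds_iff using clo_eq[of Y] by blast
  then show ?thesis
    unfolding is_direct_basis_def is_basis_def using clo_eq by blast
qed

lemma finite_ex_minimal_subset: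
  assumes "finite U" and "P U"
  shows "\<exists>V\<subseteq>U. P V \<and> (\<forall>V'. V' \<subset> V \<longrightarrow> \<not> P V')"
proof -
  have "finite {V. V \<subseteq> U \<and> P V}" and "U \<in> {V. V \<subseteq> U \<and> P V}" using assms by simp_all
  then obtain V where V: "V \<subseteq> U" "P V" and min: "\<And>W. W \<subseteq> U \<Longrightarrow> P W \<Longrightarrow> W \<subseteq> V \<Longrightarrow> V = W"
    using finite_has_minimal2[of "{V. V \<subseteq> U \<and> P V}" U] by auto
  show ?thesis
  proof (intro exI[of _ V] conjI allI impI notI)
    fix V' assume "V' \<subset> V" "P V'"
    with min[of V'] V show False by blast
  qed (use V in auto)
qed

lemma mem_canonical_direct_basis:
  "(C, d) \<in> canonical_direct_basis X F \<longleftrightarrow>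
     C \<subseteq> X \<and> d \<in> X \<and> d \<notin> C \<and> d \<in> clo F C \<and> (\<forall>C'. C' \<subset> C \<longrightarrow> d \<notin> clo F C')"
  unfolding canonical_direct_basis_def by (rule mem_Collect_eq[THEN trans]) (rule case_prod_conv)

lemma clo_canonical_direct_basis:
  assumes "finite X" and cs: "closure_system X F" and Y: "Y \<subseteq> X"
  shows "clo F Y = Y \<union> {d. \<exists>C. (C, d) \<in> canonical_direct_basis X F \<and> C \<subseteq> Y}"
proof (intro subset_antisym subsetI)
  fix d assume d: "d \<in> clo F Y"
  show "d \<in> Y \<union> {d. \<exists>C. (C, d) \<in> canonical_direct_basis X F \<and> C \<subseteq> Y}"
  proof (cases "d \<in> Y")
    case False
    have "finite Y" using assms(1) Y by (rule finite_subset[rotated])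
    then obtain C where C: "C \<subseteq> Y" "d \<in> clo F C" "\<forall>C'. C' \<subset> C \<longrightarrow> d \<notin> clo F C'"
      using finite_ex_minimal_subset[of Y "\<lambda>C. d \<in> clo F C", OF _ d] by blast
    have "d \<in> X" using d closure_system_subset[OF cs clo_in[OF cs Y]] by blast
    moreover have "C \<subseteq> X" and "d \<notin> C" using C(1) Y False by auto
    ultimately have "(C, d) \<in> canonical_direct_basis X F"
      using C(2,3) unfolding mem_canonical_direct_basis by blast
    then show ?thesis using C(1) by blast
  qed simp
next
  fix d assume "d \<in> Y \<union> {d. \<exists>C. (C, d) \<in> canonical_direct_basis X F \<and> C \<subseteq> Y}"
  then consider "d \<in> Y" | C where "(C, d) \<in> canonical_direct_basis X F" "C \<subseteq> Y" by blast
  then show "d \<in> clo F Y"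
  proof cases
    case 1
    then show ?thesis using subset_clo[of Y F] by blast
  next
    case 2
    then have "d \<in> clo F C" unfolding mem_canonical_direct_basis by blast
    with clo_mono[OF \<open>C \<subseteq> Y\<close>] show ?thesis by blast
  qed
qed

lemma upper_cover_subset:
  assumes "finite F"
    and mi: "meet_irreducible X F A" and uc: "upper_cover F A Astar"
    and Z: "Z \<in> F" "A \<subset> Z"
  shows "Astar \<subseteq> Z"
proof -
  let ?above = "{W \<in> F. A \<subset> W \<and> W \<subseteq> Z}"
  have "finite ?above" using assms(1) by simp
  moreover have "Z \<in> ?above" using Z by blast
  ultimately have "\<exists>W\<in>?above. W \<subseteq> Z \<and> (\<forall>W'\<in>?above. W' \<subseteq> W \<longrightarrow> W = W')"
    by (rule finite_has_minimal2)
  then obtain W where W: "W \<in> ?above" and W_min: "\<forall>W'\<in>?above. W' \<subseteq> W \<longrightarrow> W = W'"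
    by blast
  have "upper_cover F A W"
    unfolding upper_cover_def
  proof (intro conjI notI)
    show "W \<in> F" "A \<subset> W" using W by simp_all
    assume "\<exists>Z'\<in>F. A \<subset> Z' \<and> Z' \<subset> W"
    then obtain Z' where "Z' \<in> F" "A \<subset> Z'" "Z' \<subset> W" by blast
    with W have "Z' \<in> ?above" by auto
    with W_min \<open>Z' \<subset> W\<close> have "W = Z'" by (meson psubset_imp_subset)
    with \<open>Z' \<subset> W\<close> show False by simp
  qed
  moreover have "\<exists>!B. upper_cover F A B" using mi unfolding meet_irreducible_def by simp
  ultimately have "W = Astar" using uc by blast
  with W show ?thesis by simp
qed

lemma closure_system_Diff_meet_irreducible:
  assumes "finite F" and cs: "closure_system X F"
    and mi: "meet_irreducible X F A" and uc: "upper_cover F A Astar"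
  shows "closure_system X (F - {A})"
  unfolding closure_system_def
proof (intro conjI allI impI)
  show "F - {A} \<subseteq> Pow X" using closure_system_subset[OF cs] by blast
  have "A \<noteq> X" using mi unfolding meet_irreducible_def by simp
  then show "X \<in> F - {A}" using closure_system_top[OF cs] by blast
  fix S assume S: "S \<subseteq> F - {A}" "S \<noteq> {}"
  then have "\<Inter>S \<in> F" using closure_system_Inter[OF cs, of S] by blast
  moreover have "\<Inter>S \<noteq> A"
  proof
    assume A: "\<Inter>S = A"
    have "Astar \<subseteq> Z" if "Z \<in> S" for Z
    proof (rule upper_cover_subset[OF assms(1,3,4)])
      show "Z \<in> F" and "A \<subset> Z" using S that A by auto
    qed
    then have "Astar \<subseteq> A" using A by blast
    then show False using uc unfolding upper_cover_def by blast
  qed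
  ultimately show "\<Inter>S \<in> F - {A}" by blast
qed

lemma clo_Diff_meet_irreducible:
  assumes "finite F" and cs: "closure_system X F"
    and mi: "meet_irreducible X F A" and uc: "upper_cover F A Astar" and Y: "Y \<subseteq> X"
  shows "clo (F - {A}) Y = (if clo F Y = A then Astar else clo F Y)"
proof (cases "clo F Y = A")
  case True
  have "Astar \<in> F - {A}" and "A \<subset> Astar" using uc unfolding upper_cover_def by auto
  moreover have "Y \<subseteq> Astar" using True subset_clo[of Y F] \<open>A \<subset> Astar\<close> by blast
  ultimately have "clo (F - {A}) Y \<subseteq> Astar" by (simp add: clo_least)
  moreover have "Astar \<subseteq> Z" if Z: "Z \<in> F - {A}" "Y \<subseteq> Z" for Z
  proof (rule upper_cover_subset[OF assms(1,3,4)])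
    have "A \<subseteq> Z" using True clo_least[of Z F Y] Z by blast
    then show "Z \<in> F" and "A \<subset> Z" using Z by auto
  qed
  then have "Astar \<subseteq> clo (F - {A}) Y" unfolding clo_def by blast
  ultimately show ?thesis using True by simp
next
  case False
  then have closed: "clo F Y \<in> F - {A}" using clo_in[OF cs Y] by simp
  have "clo (F - {A}) Y \<subseteq> clo F Y" using clo_least[OF closed subset_clo[of Y F]] .
  moreover have "clo F Y \<subseteq> clo (F - {A}) Y" unfolding clo_def by blast
  ultimately show ?thesis using False by simp
qed

lemma transversal_complements_iff:
  "transversal A {A - Z | Z. Z \<in> F \<and> Z \<subset> A} U \<longleftrightarrow>
     U \<subseteq> A \<and> (\<forall>Z\<in>F. Z \<subset> A \<longrightarrow> \<not> U \<subseteq> Z)"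
proof -
  have "(\<forall>V\<in>{A - Z | Z. Z \<in> F \<and> Z \<subset> A}. U \<inter> V \<noteq> {}) \<longleftrightarrow> (\<forall>Z\<in>F. Z \<subset> A \<longrightarrow> U \<inter> (A - Z) \<noteq> {})"
    by auto
  moreover have "U \<subseteq> A \<Longrightarrow> U \<inter> (A - Z) \<noteq> {} \<longleftrightarrow> \<not> U \<subseteq> Z" for Z
    by auto
  ultimately show ?thesis
    unfolding transversal_def by auto
qed

lemma transversal_iff_clo_eq:
  assumes cs: "closure_system X F" and A: "A \<in> F" and U: "U \<subseteq> A"
  shows "transversal A {A - Z | Z. Z \<in> F \<and> Z \<subset> A} U \<longleftrightarrow> clo F U = A"
  unfolding transversal_complements_iff
proof (intro iffI conjI ballI impI notI)
  have "U \<subseteq> X" using U closure_system_subset[OF cs A] by (rule order_trans)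
  then have closed: "clo F U \<in> F" by (rule clo_in[OF cs])
  have below: "clo F U \<subseteq> A" using clo_least[OF A U] .
  assume "U \<subseteq> A \<and> (\<forall>Z\<in>F. Z \<subset> A \<longrightarrow> \<not> U \<subseteq> Z)"
  then have "\<not> clo F U \<subset> A" using closed subset_clo[of U F] by blast
  then show "clo F U = A" using below by simp
next
  fix Z assume "clo F U = A" "Z \<in> F" "Z \<subset> A" "U \<subseteq> Z"
  then show False using clo_least[of Z F U] by simp
qed (use U in simp)

lemma ex_minimal_transversal_subset_iff:
  assumes "finite A" and cs: "closure_system X F" and A: "A \<in> F"
  shows "(\<exists>V\<in>minimal_transversals A {A - Z | Z. Z \<in> F \<and> Z \<subset> A}. V \<subseteq> Y)
           \<longleftrightarrow> clo F (Y \<inter> A) = A"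
    (is "(\<exists>V\<in>minimal_transversals A ?T. _) \<longleftrightarrow> _")
proof
  assume "\<exists>V\<in>minimal_transversals A ?T. V \<subseteq> Y"
  then obtain V where V_min: "V \<in> minimal_transversals A ?T" and "V \<subseteq> Y" by blast
  from V_min have tr: "transversal A ?T V"
    unfolding minimal_transversals_def mem_Collect_eq by (rule conjunct1)
  with \<open>V \<subseteq> Y\<close> have V: "V \<subseteq> Y \<inter> A" unfolding transversal_def by blast
  then have "A = clo F V" using transversal_iff_clo_eq[OF cs A] tr by simp
  also have "\<dots> \<subseteq> clo F (Y \<inter> A)" using V by (rule clo_mono)
  finally show "clo F (Y \<inter> A) = A" using clo_least[OF A, of "Y \<inter> A"] by blast
next
  assume "clo F (Y \<inter> A) = A"
  then have "transversal A ?T (Y \<inter> A)" using transversal_iff_clo_eq[OF cs A] by simp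
  moreover have "finite (Y \<inter> A)" using assms(1) by simp
  ultimately have "\<exists>V\<subseteq>Y \<inter> A. transversal A ?T V \<and> (\<forall>V'. V' \<subset> V \<longrightarrow> \<not> transversal A ?T V')"
    by (intro finite_ex_minimal_subset)
  then obtain V where V: "V \<subseteq> Y \<inter> A"
    and min: "transversal A ?T V \<and> (\<forall>V'. V' \<subset> V \<longrightarrow> \<not> transversal A ?T V')"
    by blast
  have "V \<in> minimal_transversals A ?T"
    unfolding minimal_transversals_def mem_Collect_eq by (rule min)
  with V show "\<exists>V\<in>minimal_transversals A ?T. V \<subseteq> Y" by blast
qed

lemma clo_Diff_meet_irreducible_generates:
  assumes "finite F" and cs: "closure_system X F"
    and mi: "meet_irreducible X F A" and uc: "upper_cover F A Astar" and Y: "Y \<subseteq> X"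
  shows "clo (F - {A}) Y = clo F Y \<union> (if clo F (Y \<inter> A) = A then Astar - A else {})"
proof -
  have A_Astar: "A \<subset> Astar" using uc unfolding upper_cover_def by simp
  show ?thesis
  proof (cases "clo F Y = A")
    case True
    then have "Y \<inter> A = Y" using subset_clo[of Y F] by blast
    with True A_Astar show ?thesis
      using clo_Diff_meet_irreducible[OF assms] by auto
  next
    case False
    moreover have "Astar \<subseteq> clo F Y" if "clo F (Y \<inter> A) = A"
    proof (rule upper_cover_subset[OF assms(1,3,4) clo_in[OF cs Y]])
      show "A \<subset> clo F Y" using that clo_mono[of "Y \<inter> A" Y F] False by blast
    qed
    ultimately show ?thesis
      using clo_Diff_meet_irreducible[OF assms] by auto
  qed
qed

theorem mainTheorem7:
  fixes X :: "'a set" and F :: "'a set set" and A Astar :: "'a set"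
  assumes "finite X"
    and "closure_system X F"
    and "meet_irreducible X F A"
    and "upper_cover F A Astar"
  shows "is_direct_basis X
           (canonical_direct_basis X F \<union>
            {(Y, d). Y \<in> minimal_transversals A {A - Z | Z. Z \<in> F \<and> Z \<subset> A} \<and> d \<in> Astar - A})
           (F - {A})"
proof -
  have irreducible: "finite F" "closure_system X F" "meet_irreducible X F A" "upper_cover F A Astar"
    using finite_closure_system[OF assms(1,2)] assms(2-4) by simp_all
  have A: "A \<in> F" using assms(3) unfolding meet_irreducible_def by simp
  have "finite A"
    using assms(1) closure_system_subset[OF assms(2) A] by (rule finite_subset[rotated])
  note generates = ex_minimal_transversal_subset_iff[OF this assms(2) A]
  show ?thesis
  proof (rule is_direct_basisI[OF closure_system_Diff_meet_irreducible[OF irreducible]])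
    fix Y assume Y: "Y \<subseteq> X"
    have "clo (F - {A}) Y = clo F Y \<union> (if clo F (Y \<inter> A) = A then Astar - A else {})"
      by (rule clo_Diff_meet_irreducible_generates[OF irreducible Y])
    also have "\<dots> = Y \<union> {d. \<exists>C. (C, d) \<in> canonical_direct_basis X F \<and> C \<subseteq> Y} \<union>
        {d. \<exists>V. V \<in> minimal_transversals A {A - Z | Z. Z \<in> F \<and> Z \<subset> A} \<and> d \<in> Astar - A \<and> V \<subseteq> Y}"
      unfolding clo_canonical_direct_basis[OF assms(1,2) Y] using generates[of Y] by auto
    finally show "clo (F - {A}) Y = Y \<union> {d. \<exists>C. (C, d) \<in> canonical_direct_basis X F \<union>
        {(Y, d). Y \<in> minimal_transversals A {A - Z | Z. Z \<in> F \<and> Z \<subset> A} \<and> d \<in> Astar - A}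
        \<and> C \<subseteq> Y}"
      by auto
  qed
qed

end
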